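(* Let $n\in\mathbb N$, $\varepsilon,h,d>0$, $q\in(0,1)$. Let $\bar u\in(q,1)$ be a root of $g(u):=u(1-u)(u+q)-\varepsilon hq(u-q)$, and set $S:=(q,\bar u)^2\subset\mathbb R^2$. Let $u_0,v_0\in BUC(\mathbb R^n)$ with $(u_0(x),v_0(x))\in S$ for all $x\in\mathbb R^n$, and let $(u,v)$ be the time-global non-negative classical solution of (BZ) with these initial data. Then $(u(x,t),v(x,t))\in S$ for all $x\in\mathbb R^n$ and all $t>0$.
   Context: $BUC(\mathbb R^n)$ denotes the bounded uniformly continuous functions on $\mathbb R^n$ with the sup norm. (BZ) is the system $\partial_t u=\Delta u+\frac1\varepsilon u(1-u)-hv\frac{u-q}{u+q}$, $\partial_t v=d\Delta v-v+u$ in $\mathbb R^n\times(0,\infty)$, $u|_{t=0}=u_0$, $v|_{t=0}=v_0$. For non-negative $u_0,v_0\in BUC$ there is a unique global non-negative classical solution $(u,v)\in C([0,\infty);BUC(\mathbb R^n))^2$ ($C^1$ in $t$, $C^2$ in $x$ for $t>0$). *)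

theory Defs
  imports "HOL-Analysis.Analysis"
begin

definition BUC :: "(real^'n \<Rightarrow> real) set" where
  "BUC = {f. bounded (range f) \<and> uniformly_continuous_on UNIV f}"

definition C_BUC :: "(real^'n \<Rightarrow> real \<Rightarrow> real) \<Rightarrow> bool" where
  "C_BUC w \<longleftrightarrow>
     (\<forall>t\<ge>0. (\<lambda>x. w x t) \<in> BUC) \<and>
     (\<forall>t\<ge>0. \<forall>e>0. \<exists>\<delta>>0. \<forall>s\<ge>0. \<bar>s - t\<bar> < \<delta> \<longrightarrow> (\<forall>x. \<bar>w x s - w x t\<bar> \<le> e))"

definition classical_reg ::
  "(real^'n \<Rightarrow> real \<Rightarrow> real) \<Rightarrow> (real^'n \<Rightarrow> real \<Rightarrow> real) \<Rightarrow>
   (real^'n \<Rightarrow> real \<Rightarrow> real^'n) \<Rightarrow> (real^'n \<Rightarrow> real \<Rightarrow> real^'n^'n) \<Rightarrow> bool" where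
  "classical_reg w wt Dw D2w \<longleftrightarrow>
     (\<forall>x. \<forall>t>0. ((\<lambda>s. w x s) has_real_derivative wt x t) (at t)) \<and>
     (\<forall>x. continuous_on {0<..} (\<lambda>s. wt x s)) \<and>
     (\<forall>x. \<forall>t>0. ((\<lambda>y. w y t) has_derivative (\<lambda>k. Dw x t \<bullet> k)) (at x)) \<and>
     (\<forall>x. \<forall>t>0. ((\<lambda>y. Dw y t) has_derivative (\<lambda>k. D2w x t *v k)) (at x)) \<and>
     (\<forall>t>0. continuous_on UNIV (\<lambda>y. D2w y t))"

definition lap_of :: "real^'n^'n \<Rightarrow> real" where
  "lap_of H = (\<Sum>i\<in>UNIV. H $ i $ i)"

definition BZ_solution ::
  "real \<Rightarrow> real \<Rightarrow> real \<Rightarrow> real \<Rightarrow> (real^'n \<Rightarrow> real) \<Rightarrow> (real^'n \<Rightarrow> real) \<Rightarrow>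
   (real^'n \<Rightarrow> real \<Rightarrow> real) \<Rightarrow> (real^'n \<Rightarrow> real \<Rightarrow> real) \<Rightarrow> bool" where
  "BZ_solution \<epsilon> h q d u0 v0 u v \<longleftrightarrow>
     C_BUC u \<and> C_BUC v \<and>
     (\<forall>x. u x 0 = u0 x) \<and> (\<forall>x. v x 0 = v0 x) \<and>
     (\<forall>x. \<forall>t\<ge>0. u x t \<ge> 0 \<and> v x t \<ge> 0) \<and>
     (\<exists>ut Du D2u vt Dv D2v.
        classical_reg u ut Du D2u \<and> classical_reg v vt Dv D2v \<and>
        (\<forall>x. \<forall>t>0.
           ut x t = lap_of (D2u x t) + (1/\<epsilon>) * u x t * (1 - u x t)
                     - h * v x t * (u x t - q) / (u x t + q) \<and>
           vt x t = d * lap_of (D2v x t) - v x t + u x t))"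

end

theory Submission
  imports Defs
begin

(* The square [q, ubar]^2 is shown to be invariant, and then strictly invariant for t > 0, by
   comparing u and v with barriers that depend on t only.  Comparison rests on a weak minimum
   principle on the unbounded domain: a supersolution of w_t >= a Delta w + K w that is bounded
   below on strips and nonnegative at t = 0 stays nonnegative, since a negative minimum of
   exp(-K t) w + delta (|x|^2 + mu t) would violate the first- and second-order conditions there.
   On the edges of the square the reaction term points inwards: it is nonnegative for u < q, and
   the root condition on ubar makes it at most (u - ubar)/eps for u > ubar.  Strictness comes from
   the barriers q + alpha s, q + beta s^2, ubar - kappa s^3, ubar - sigma s^4 in s = 1 - exp(-t):
   each is fed by the previous one through the coupling, and the increasing powers of s let the
   margin already gained dominate the time derivative of the next barrier near t = 0. *)

lemma deriv2_nonneg_at_min: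
  fixes \<phi> \<phi>' :: "real \<Rightarrow> real"
  assumes min: "\<And>r. \<phi> 0 \<le> \<phi> r"
    and d1: "\<And>r. (\<phi> has_real_derivative \<phi>' r) (at r)"
    and d2: "(\<phi>' has_real_derivative c) (at 0)"
  shows "c \<ge> 0"
proof (rule ccontr)
  assume "\<not> c \<ge> 0"
  then obtain e where e: "e > 0" "\<And>r. 0 < r \<Longrightarrow> r < e \<Longrightarrow> \<phi>' r < \<phi>' 0"
    using DERIV_neg_dec_right[OF d2] by (metis add_0 not_le)
  have "\<phi>' 0 = 0"
    using DERIV_local_min[OF d1 zero_less_one] min by blast
  obtain z where z: "0 < z" "z < e/2" "\<phi> (e/2) - \<phi> 0 = (e/2 - 0) * \<phi>' z"
    using MVT2[of 0 "e/2" \<phi> \<phi>'] d1 e by auto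
  have "\<phi>' z < 0" using e z \<open>\<phi>' 0 = 0\<close> by auto
  with e have "(e/2) * \<phi>' z < 0" by (simp add: mult_pos_neg)
  with z have "\<phi> (e/2) < \<phi> 0" by simp
  with min show False by (simp add: not_less[symmetric])
qed

lemma deriv_nonpos_at_left_min:
  fixes f :: "real \<Rightarrow> real"
  assumes "(f has_real_derivative f') (at t)" "a < t"
    and min: "\<And>s. a \<le> s \<Longrightarrow> s \<le> t \<Longrightarrow> f t \<le> f s"
  shows "f' \<le> 0"
proof (rule ccontr)
  assume "\<not> f' \<le> 0"
  then obtain e where e: "e > 0" "\<And>h. 0 < h \<Longrightarrow> h < e \<Longrightarrow> f (t - h) < f t"
    using DERIV_pos_inc_left[OF assms(1)] by auto
  define h where "h = min e (t - a) / 2"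
  have "0 < h" "h < e" "h \<le> (t - a) / 2" using e \<open>a < t\<close> by (auto simp: h_def)
  with e min[of "t - h"] show False by force
qed

lemma has_real_derivative_along_axis:
  fixes f :: "real^'n \<Rightarrow> real"
  assumes "(f has_derivative (\<lambda>k. Df \<bullet> k)) (at (x + r *\<^sub>R axis i 1))"
  shows "((\<lambda>r. f (x + r *\<^sub>R axis i 1)) has_real_derivative Df $ i) (at r)"
proof -
  have "((\<lambda>r. x + r *\<^sub>R axis i (1::real)) has_derivative (\<lambda>h. h *\<^sub>R axis i 1)) (at r)"
    by (auto intro!: derivative_eq_intros)
  from has_derivative_compose[OF this assms]
  have "((\<lambda>r. f (x + r *\<^sub>R axis i 1)) has_derivative (\<lambda>h. Df \<bullet> (h *\<^sub>R axis i 1))) (at r)" .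
  then show ?thesis
    by (simp add: has_field_derivative_def inner_axis mult_commute_abs)
qed

lemma lap_nonneg_at_min:
  fixes f :: "real^'n \<Rightarrow> real" and Df :: "real^'n \<Rightarrow> real^'n"
  assumes min: "\<And>y. f x \<le> f y"
    and Df: "\<And>y. (f has_derivative (\<lambda>k. Df y \<bullet> k)) (at y)"
    and D2f: "(Df has_derivative (\<lambda>k. H *v k)) (at x)"
  shows "lap_of H \<ge> 0"
proof -
  have "H $ i $ i \<ge> 0" for i
  proof (rule deriv2_nonneg_at_min)
    show "f (x + 0 *\<^sub>R axis i 1) \<le> f (x + r *\<^sub>R axis i 1)" for r
      using min by simp
    show "((\<lambda>r. f (x + r *\<^sub>R axis i 1)) has_real_derivative Df (x + r *\<^sub>R axis i 1) $ i) (at r)" for r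
      by (rule has_real_derivative_along_axis[OF Df])
    have "((\<lambda>r. x + r *\<^sub>R axis i (1::real)) has_derivative (\<lambda>h. h *\<^sub>R axis i 1)) (at 0)"
      by (auto intro!: derivative_eq_intros)
    with D2f have "((\<lambda>r. Df (x + r *\<^sub>R axis i 1)) has_derivative (\<lambda>h. H *v (h *\<^sub>R axis i 1))) (at 0)"
      using has_derivative_compose by fastforce
    then have "((\<lambda>r. Df (x + r *\<^sub>R axis i 1) $ i) has_derivative (\<lambda>h. (H *v (h *\<^sub>R axis i 1)) $ i)) (at 0)"
      by (rule has_derivative_compose[OF _ bounded_linear.has_derivative[OF bounded_linear_vec_nth has_derivative_ident]])
    moreover have "(\<lambda>h. (H *v (h *\<^sub>R axis i 1)) $ i) = (*) (H $ i $ i)"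
      by (auto simp: matrix_vector_mult_def axis_def if_distrib cong: if_cong)
    ultimately show "((\<lambda>r. Df (x + r *\<^sub>R axis i 1) $ i) has_real_derivative H $ i $ i) (at 0)"
      by (simp add: has_field_derivative_def)
  qed
  then show ?thesis
    unfolding lap_of_def by (simp add: sum_nonneg)
qed

lemma parabolic_min_conditions:
  fixes W :: "real^'n \<Rightarrow> real \<Rightarrow> real" and Wt :: real and DW :: "real^'n \<Rightarrow> real^'n"
  assumes "0 < t"
    and min: "\<And>y s. 0 \<le> s \<Longrightarrow> s \<le> t \<Longrightarrow> W x t \<le> W y s"
    and dt: "((\<lambda>s. W x s) has_real_derivative Wt) (at t)"
    and dx: "\<And>y. ((\<lambda>y. W y t) has_derivative (\<lambda>k. DW y \<bullet> k)) (at y)"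
    and dxx: "(DW has_derivative (\<lambda>k. H *v k)) (at x)"
  shows "Wt \<le> 0" and "lap_of H \<ge> 0"
proof -
  show "Wt \<le> 0"
    by (rule deriv_nonpos_at_left_min[OF dt \<open>0 < t\<close>]) (use min in auto)
  show "lap_of H \<ge> 0"
    by (rule lap_nonneg_at_min[OF _ dx dxx]) (use min \<open>0 < t\<close> in auto)
qed

lemma coercive_attains_min:
  fixes f :: "'a::euclidean_space \<times> 'b::topological_space \<Rightarrow> real"
  assumes "compact K" "K \<noteq> {}" and cont: "continuous_on (UNIV \<times> K) f" and "0 < c"
    and coercive: "\<And>x t. t \<in> K \<Longrightarrow> c * norm x ^ 2 - M \<le> f (x, t)"
  obtains p where "p \<in> UNIV \<times> K" "\<And>p'. p' \<in> UNIV \<times> K \<Longrightarrow> f p \<le> f p'"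
proof -
  obtain t0 where "t0 \<in> K" using \<open>K \<noteq> {}\<close> by blast
  define R where "R = sqrt (max 0 ((f (0, t0) + M) / c)) + 1"
  define S :: "('a \<times> 'b) set" where "S = cball 0 R \<times> K"
  have far: "f (0, t0) < f (x, t)" if "t \<in> K" "R < norm x" for x t
  proof -
    have "sqrt (max 0 ((f (0, t0) + M) / c)) < norm x" using that by (simp add: R_def)
    then have "sqrt (max 0 ((f (0, t0) + M) / c)) ^ 2 < norm x ^ 2"
      by (intro power_strict_mono) auto
    then have "(f (0, t0) + M) / c < norm x ^ 2" by simp
    then have "f (0, t0) + M < c * norm x ^ 2" using \<open>0 < c\<close> by (simp add: field_simps)
    with coercive[OF \<open>t \<in> K\<close>, of x] show ?thesis by linarith
  qed
  have "compact S"
    unfolding S_def by (rule compact_Times[OF compact_cball \<open>compact K\<close>])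
  moreover have "(0, t0) \<in> S" using \<open>t0 \<in> K\<close> by (simp add: S_def R_def)
  moreover have "continuous_on S f" by (rule continuous_on_subset[OF cont]) (auto simp: S_def)
  ultimately obtain p where p: "p \<in> S" "\<And>p'. p' \<in> S \<Longrightarrow> f p \<le> f p'"
    using continuous_attains_inf by (metis empty_iff)
  show thesis
  proof (rule that)
    show "p \<in> UNIV \<times> K" using p by (auto simp: S_def)
    fix p' :: "'a \<times> 'b" assume "p' \<in> UNIV \<times> K"
    then obtain x t where p': "p' = (x, t)" "t \<in> K" by auto
    show "f p \<le> f p'"
    proof (cases "norm x \<le> R")
      case True
      then show ?thesis using p p' by (simp add: S_def)
    next
      case False
      then show ?thesis using p(2)[OF \<open>(0, t0) \<in> S\<close>] far[of t x] p' by simp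
    qed
  qed
qed

(* The time penalty delta mu t outweighs the Laplacian 2 delta n of the spatial penalty
   delta |x|^2, because mu > 2 a n. *)
lemma penalized_supersolution_no_min:
  fixes w :: "real^'n \<Rightarrow> real \<Rightarrow> real" and Dw :: "real^'n \<Rightarrow> real \<Rightarrow> real^'n"
    and D2w :: "real^'n \<Rightarrow> real \<Rightarrow> real^'n^'n" and a :: real
  defines "\<mu> \<equiv> 2 * a * real CARD('n) + 1"
  assumes "0 \<le> a" "0 < \<delta>" "0 < t"
    and dt: "((\<lambda>s. w x s) has_real_derivative wt) (at t)"
    and dx: "\<And>y. ((\<lambda>y. w y t) has_derivative (\<lambda>k. Dw y t \<bullet> k)) (at y)"
    and dxx: "((\<lambda>y. Dw y t) has_derivative (\<lambda>k. D2w x t *v k)) (at x)"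
    and super: "a * lap_of (D2w x t) + K * w x t \<le> wt"
    and min: "\<And>y s. 0 \<le> s \<Longrightarrow> s \<le> t \<Longrightarrow>
      exp (- K * t) * w x t + \<delta> * (norm x ^ 2 + \<mu> * t) \<le> exp (- K * s) * w y s + \<delta> * (norm y ^ 2 + \<mu> * s)"
  shows False
proof -
  let ?E = "exp (- K * t)"
  let ?DW = "\<lambda>y. ?E *\<^sub>R Dw y t + (2 * \<delta>) *\<^sub>R y"
  have Wt: "((\<lambda>s. exp (- K * s) * w x s + \<delta> * (norm x ^ 2 + \<mu> * s)) has_real_derivative
      ?E * (wt - K * w x t) + \<delta> * \<mu>) (at t)"
    using dt by (auto intro!: derivative_eq_intros simp: algebra_simps)
  have DW: "((\<lambda>y. ?E * w y t + \<delta> * (norm y ^ 2 + \<mu> * t)) has_derivative (\<lambda>k. ?DW y \<bullet> k)) (at y)" for y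
    unfolding power2_norm_eq_inner using dx[of y]
    by (auto intro!: derivative_eq_intros simp: algebra_simps inner_commute)
  have D2W: "(?DW has_derivative (\<lambda>k. (?E *\<^sub>R D2w x t + (2 * \<delta>) *\<^sub>R mat 1) *v k)) (at x)"
    using dxx by (auto intro!: derivative_eq_intros
        simp: matrix_vector_mult_add_rdistrib scaleR_matrix_vector_assoc[symmetric])
  note conditions = parabolic_min_conditions[where W = "\<lambda>y s. exp (- K * s) * w y s + \<delta> * (norm y ^ 2 + \<mu> * s)",
      OF \<open>0 < t\<close> min Wt DW D2W]
  note lap = conditions(2)
  moreover have "lap_of (?E *\<^sub>R D2w x t + (2 * \<delta>) *\<^sub>R mat 1) = ?E * lap_of (D2w x t) + 2 * \<delta> * CARD('n)"
    by (simp add: lap_of_def sum.distrib sum_distrib_left mat_def)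
  moreover have "?E * (a * lap_of (D2w x t)) \<le> ?E * (wt - K * w x t)"
    using super by simp
  ultimately have "\<delta> * \<mu> \<le> 2 * a * \<delta> * CARD('n)"
    using conditions(1) \<open>0 \<le> a\<close> mult_left_mono[OF lap \<open>0 \<le> a\<close>]
    by (simp add: algebra_simps)
  then show False using \<open>0 < \<delta>\<close> by (simp add: \<mu>_def algebra_simps)
qed

lemma penalized_attains_min:
  fixes w :: "real^'n \<Rightarrow> real \<Rightarrow> real"
  assumes cont: "continuous_on (UNIV \<times> {0..T}) (\<lambda>p. w (fst p) (snd p))"
    and bounded_below: "\<And>y s. s \<in> {0..T} \<Longrightarrow> - M \<le> w y s"
    and "0 < \<delta>" "0 \<le> \<mu>" "0 \<le> T"
  obtains x t where "t \<in> {0..T}"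
    "\<And>y s. s \<in> {0..T} \<Longrightarrow>
      exp (- K * t) * w x t + \<delta> * (norm x ^ 2 + \<mu> * t) \<le> exp (- K * s) * w y s + \<delta> * (norm y ^ 2 + \<mu> * s)"
proof -
  define z where "z p = exp (- K * snd p) * w (fst p) (snd p) + \<delta> * (norm (fst p) ^ 2 + \<mu> * snd p)"
    for p :: "(real^'n) \<times> real"
  have "\<delta> * norm y ^ 2 - exp (\<bar>K\<bar> * T) * max M 0 \<le> z (y, s)" if "s \<in> {0..T}" for y s
  proof -
    have "- K * s \<le> \<bar>K\<bar> * s" using that by (intro mult_right_mono) auto
    also have "\<dots> \<le> \<bar>K\<bar> * T" using that by (intro mult_left_mono) auto
    finally have "exp (- K * s) * max M 0 \<le> exp (\<bar>K\<bar> * T) * max M 0"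
      by (intro mult_right_mono) auto
    moreover have "exp (- K * s) * (- max M 0) \<le> exp (- K * s) * w y s"
      using bounded_below[OF that, of y] by (intro mult_left_mono) auto
    moreover have "0 \<le> \<delta> * (\<mu> * s)" using \<open>0 < \<delta>\<close> \<open>0 \<le> \<mu>\<close> that by simp
    ultimately show ?thesis by (simp add: z_def algebra_simps)
  qed
  moreover have "continuous_on (UNIV \<times> {0..T}) z"
    unfolding z_def by (intro continuous_intros cont)
  ultimately obtain p where p: "p \<in> UNIV \<times> {0..T}" "\<And>p'. p' \<in> UNIV \<times> {0..T} \<Longrightarrow> z p \<le> z p'"
    using coercive_attains_min[where K = "{0..T}" and f = z, OF compact_Icc] \<open>0 < \<delta>\<close> \<open>0 \<le> T\<close>
    by (metis atLeastAtMost_iff order.refl empty_iff)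
  obtain x t where "p = (x, t)" by (cases p)
  show thesis
    by (rule that[of t x]) (use p \<open>p = (x, t)\<close> in \<open>auto simp: z_def\<close>)
qed

lemma supersolution_nonneg:
  fixes w wt :: "real^'n \<Rightarrow> real \<Rightarrow> real" and Dw :: "real^'n \<Rightarrow> real \<Rightarrow> real^'n"
    and D2w :: "real^'n \<Rightarrow> real \<Rightarrow> real^'n^'n"
  assumes "0 \<le> a"
    and cont: "continuous_on (UNIV \<times> {0..}) (\<lambda>p. w (fst p) (snd p))"
    and bounded_below: "\<And>T. \<exists>M. \<forall>x. \<forall>t\<in>{0..T}. - M \<le> w x t"
    and init: "\<And>x. 0 \<le> w x 0"
    and dt: "\<And>x t. 0 < t \<Longrightarrow> ((\<lambda>s. w x s) has_real_derivative wt x t) (at t)"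
    and dx: "\<And>x t. 0 < t \<Longrightarrow> ((\<lambda>y. w y t) has_derivative (\<lambda>k. Dw x t \<bullet> k)) (at x)"
    and dxx: "\<And>x t. 0 < t \<Longrightarrow> ((\<lambda>y. Dw y t) has_derivative (\<lambda>k. D2w x t *v k)) (at x)"
    and super: "\<And>x t. 0 < t \<Longrightarrow> w x t < 0 \<Longrightarrow> a * lap_of (D2w x t) + K * w x t \<le> wt x t"
    and "0 \<le> t"
  shows "0 \<le> w x t"
proof (rule ccontr)
  assume "\<not> 0 \<le> w x t"
  then have neg: "exp (- K * t) * w x t < 0" by (simp add: mult_pos_neg)
  define \<mu> where "\<mu> = 2 * a * real CARD('n) + 1"
  define Q where "Q = norm x ^ 2 + \<mu> * t + 1"
  define \<delta> where "\<delta> = - exp (- K * t) * w x t / (2 * Q)"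
  define z where "z y s = exp (- K * s) * w y s + \<delta> * (norm y ^ 2 + \<mu> * s)" for y s
  have "0 \<le> \<mu>" "0 < Q" using \<open>0 \<le> a\<close> \<open>0 \<le> t\<close> by (simp_all add: Q_def \<mu>_def add_nonneg_pos)
  then have "0 < \<delta>" and "\<delta> * Q = - exp (- K * t) * w x t / 2"
    using neg by (simp_all add: \<delta>_def divide_neg_pos)
  then have "z x t < 0" using neg by (simp add: z_def Q_def algebra_simps)
  have "continuous_on (UNIV \<times> {0..t}) (\<lambda>p. w (fst p) (snd p))"
    by (rule continuous_on_subset[OF cont]) auto
  moreover obtain M where "\<forall>y. \<forall>s\<in>{0..t}. - M \<le> w y s" using bounded_below by blast
  ultimately obtain xs ts where "ts \<in> {0..t}" and min: "\<And>y s. s \<in> {0..t} \<Longrightarrow> z xs ts \<le> z y s"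
    using penalized_attains_min[where w = w and K = K and M = M and \<delta> = \<delta> and \<mu> = \<mu> and T = t]
      \<open>0 < \<delta>\<close> \<open>0 \<le> \<mu>\<close> \<open>0 \<le> t\<close> unfolding z_def by blast
  have "z xs ts < 0" using min[of t x] \<open>z x t < 0\<close> \<open>0 \<le> t\<close> by simp
  have "0 < ts"
  proof (rule ccontr)
    assume "\<not> 0 < ts"
    then have "z xs ts = w xs 0 + \<delta> * norm xs ^ 2" using \<open>ts \<in> {0..t}\<close> by (simp add: z_def)
    moreover have "0 \<le> \<delta> * norm xs ^ 2" using \<open>0 < \<delta>\<close> by simp
    ultimately show False using \<open>z xs ts < 0\<close> init[of xs] by linarith
  qed
  have "w xs ts < 0"
  proof (rule ccontr)
    assume "\<not> w xs ts < 0"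
    then have "0 \<le> z xs ts" using \<open>0 < \<delta>\<close> \<open>0 < ts\<close> \<open>0 \<le> \<mu>\<close> by (simp add: z_def)
    with \<open>z xs ts < 0\<close> show False by simp
  qed
  show False
    by (rule penalized_supersolution_no_min[where w = w and Dw = Dw and D2w = D2w,
          OF \<open>0 \<le> a\<close> \<open>0 < \<delta>\<close> \<open>0 < ts\<close> dt[OF \<open>0 < ts\<close>] dx[OF \<open>0 < ts\<close>] dxx[OF \<open>0 < ts\<close>]
          super[OF \<open>0 < ts\<close> \<open>w xs ts < 0\<close>]])
      (use min \<open>ts \<in> {0..t}\<close> in \<open>auto simp: z_def \<mu>_def\<close>)
qed

lemma C_BUC_bounded_on_strip:
  assumes "C_BUC w" shows "\<exists>M. \<forall>x. \<forall>t\<in>{0..T}. \<bar>w x t\<bar> \<le> M"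
proof -
  define f where "f t = Bcontfun (\<lambda>x. w x t)" for t
  have mem: "(\<lambda>x. w x t) \<in> bcontfun" if "t \<ge> 0" for t
    using assms that unfolding C_BUC_def BUC_def bcontfun_def
    by (auto intro: uniformly_continuous_imp_continuous)
  have app: "apply_bcontfun (f t) = (\<lambda>x. w x t)" if "t \<ge> 0" for t
    using mem[OF that] by (simp add: f_def Bcontfun_inverse)
  have "continuous_on {0..T} f"
    unfolding continuous_on_iff
  proof (intro ballI allI impI)
    fix t e :: real assume t: "t \<in> {0..T}" and e: "e > 0"
    obtain d where d: "d > 0" "\<forall>s\<ge>0. \<bar>s - t\<bar> < d \<longrightarrow> (\<forall>x. \<bar>w x s - w x t\<bar> \<le> e/2)"
      using assms t e unfolding C_BUC_def by (meson atLeastAtMost_iff half_gt_zero)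
    show "\<exists>d>0. \<forall>s\<in>{0..T}. dist s t < d \<longrightarrow> dist (f s) (f t) < e"
    proof (intro exI[of _ d] conjI ballI impI)
      fix s assume s: "s \<in> {0..T}" "dist s t < d"
      have "dist (f s) (f t) \<le> e/2"
      proof (rule dist_bound)
        fix x show "dist (f s x) (f t x) \<le> e/2"
          using app[of s] app[of t] s t d by (auto simp: dist_real_def)
      qed
      then show "dist (f s) (f t) < e" using e by simp
    qed (use d in auto)
  qed
  then have "compact (f ` {0..T})" by (rule compact_continuous_image) simp
  then have "bounded (f ` {0..T})" by (rule compact_imp_bounded)
  then obtain M where M: "\<forall>g\<in>f ` {0..T}. norm g \<le> M" by (auto simp: bounded_iff)
  show ?thesis
  proof (intro exI[of _ M] allI ballI)
    fix x t assume t: "t \<in> {0..T}"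
    have "\<bar>w x t\<bar> = norm (apply_bcontfun (f t) x)" using app[of t] t by simp
    also have "\<dots> \<le> norm (f t)" by (rule norm_bounded)
    also have "\<dots> \<le> M" using M t by auto
    finally show "\<bar>w x t\<bar> \<le> M" .
  qed
qed

lemma C_BUC_continuous_on:
  assumes "C_BUC w" shows "continuous_on (UNIV \<times> {0..}) (\<lambda>p. w (fst p) (snd p))"
  unfolding continuous_on_iff
proof (intro ballI allI impI)
  fix p :: "(real^'a) \<times> real" and e :: real assume p: "p \<in> UNIV \<times> {0..}" and e: "e > 0"
  obtain x t where pxt: "p = (x,t)" by (cases p)
  have t: "t \<ge> 0" using p pxt by auto
  have e4: "e/4 > 0" using e by simp
  have "\<forall>t\<ge>0. \<forall>e>0. \<exists>\<delta>>0. \<forall>s\<ge>0. \<bar>s - t\<bar> < \<delta> \<longrightarrow> (\<forall>x. \<bar>w x s - w x t\<bar> \<le> e)"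
    using assms unfolding C_BUC_def by blast
  then obtain d1 where d1: "d1 > 0" and d1': "\<And>s y. s\<ge>0 \<Longrightarrow> \<bar>s - t\<bar> < d1 \<Longrightarrow> \<bar>w y s - w y t\<bar> \<le> e/4"
    using t e4 by meson
  have "uniformly_continuous_on UNIV (\<lambda>x. w x t)" using assms t unfolding C_BUC_def BUC_def by auto
  moreover have e2: "e/2 > 0" using e by simp
  ultimately obtain d2 where d2: "d2 > 0" and d2': "\<And>y y'. dist y' y < d2 \<Longrightarrow> dist (w y' t) (w y t) < e/2"
    unfolding uniformly_continuous_on_def by (meson UNIV_I)
  show "\<exists>d>0. \<forall>p'\<in>UNIV \<times> {0..}. dist p' p < d \<longrightarrow> dist (w (fst p') (snd p')) (w (fst p) (snd p)) < e"
  proof (intro exI[of _ "min d1 d2"] conjI ballI impI)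
    fix p' :: "(real^'a) \<times> real" assume p': "p' \<in> UNIV \<times> {0..}" "dist p' p < min d1 d2"
    obtain y s where pys: "p' = (y,s)" by (cases p')
    have a1: "dist y x < d2" using dist_fst_le[of p' p] p' pys pxt by auto
    have a2: "\<bar>s - t\<bar> < d1" using dist_snd_le[of p' p] p' pys pxt by (auto simp: dist_real_def)
    have a3: "s \<ge> 0" using p' pys by auto
    have b1: "\<bar>w y s - w y t\<bar> \<le> e/4" by (rule d1'[OF a3 a2])
    have b2: "\<bar>w y t - w x t\<bar> < e/2" using d2'[OF a1] by (simp add: dist_real_def)
    have "\<bar>w y s - w x t\<bar> < e" using b1 b2 e by linarith
    then show "dist (w (fst p') (snd p')) (w (fst p) (snd p)) < e" using pys pxt
      by (simp add: dist_real_def)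
  qed (use d1 d2 in auto)
qed

lemma comparison_principle:
  fixes U Ut :: "real^'n \<Rightarrow> real \<Rightarrow> real" and DU :: "real^'n \<Rightarrow> real \<Rightarrow> real^'n"
    and D2U :: "real^'n \<Rightarrow> real \<Rightarrow> real^'n^'n" and g g' :: "real \<Rightarrow> real"
  assumes "C_BUC U" and reg: "classical_reg U Ut DU D2U" and "0 \<le> a"
    and g: "continuous_on {0..} g" and g': "\<And>t. 0 < t \<Longrightarrow> (g has_real_derivative g' t) (at t)"
    and init: "\<And>x. 0 \<le> \<sigma> * U x 0 + g 0"
    and super: "\<And>x t. 0 < t \<Longrightarrow> \<sigma> * U x t + g t < 0 \<Longrightarrow>
      a * (\<sigma> * lap_of (D2U x t)) + K * (\<sigma> * U x t + g t) \<le> \<sigma> * Ut x t + g' t"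
    and "0 \<le> t"
  shows "0 \<le> \<sigma> * U x t + g t"
proof (rule supersolution_nonneg[where w = "\<lambda>x t. \<sigma> * U x t + g t" and wt = "\<lambda>x t. \<sigma> * Ut x t + g' t"
      and Dw = "\<lambda>x t. \<sigma> *\<^sub>R DU x t" and D2w = "\<lambda>x t. \<sigma> *\<^sub>R D2U x t" and K = K,
      OF \<open>0 \<le> a\<close> _ _ init _ _ _ _ \<open>0 \<le> t\<close>])
  have "continuous_on (UNIV \<times> {0..}) (\<lambda>p. g (snd p))"
    by (rule continuous_on_compose2[OF g continuous_on_snd]) auto
  then show "continuous_on (UNIV \<times> {0..}) (\<lambda>p. \<sigma> * U (fst p) (snd p) + g (snd p))"
    by (intro continuous_intros C_BUC_continuous_on[OF \<open>C_BUC U\<close>])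
  show "\<exists>M. \<forall>x. \<forall>t\<in>{0..T}. - M \<le> \<sigma> * U x t + g t" for T
  proof -
    obtain M where M: "\<forall>x. \<forall>t\<in>{0..T}. \<bar>U x t\<bar> \<le> M"
      using C_BUC_bounded_on_strip[OF \<open>C_BUC U\<close>] by blast
    have "compact (g ` {0..T})"
      by (rule compact_continuous_image[OF continuous_on_subset[OF g]]) auto
    then obtain G where G: "\<forall>y\<in>g ` {0..T}. \<bar>y\<bar> \<le> G"
      using compact_imp_bounded bounded_iff real_norm_def by metis
    have "- (\<bar>\<sigma>\<bar> * M + G) \<le> \<sigma> * U x t + g t" if "t \<in> {0..T}" for x t
    proof -
      have "\<bar>\<sigma> * U x t\<bar> \<le> \<bar>\<sigma>\<bar> * M" using M that by (simp add: abs_mult mult_left_mono)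
      moreover have "\<bar>g t\<bar> \<le> G" using G that by auto
      ultimately show ?thesis by linarith
    qed
    then show ?thesis by blast
  qed
  fix x and t :: real assume "0 < t"
  show "((\<lambda>s. \<sigma> * U x s + g s) has_real_derivative \<sigma> * Ut x t + g' t) (at t)"
    using reg g'[OF \<open>0 < t\<close>] \<open>0 < t\<close> unfolding classical_reg_def
    by (auto intro!: derivative_eq_intros)
  show "((\<lambda>y. \<sigma> * U y t + g t) has_derivative (\<lambda>k. (\<sigma> *\<^sub>R DU x t) \<bullet> k)) (at x)"
    using reg \<open>0 < t\<close> unfolding classical_reg_def by (auto intro!: derivative_eq_intros)
  show "((\<lambda>y. \<sigma> *\<^sub>R DU y t) has_derivative (\<lambda>k. (\<sigma> *\<^sub>R D2U x t) *v k)) (at x)"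
    using reg \<open>0 < t\<close> unfolding classical_reg_def
    by (auto intro!: derivative_eq_intros simp: scaleR_matrix_vector_assoc[symmetric])
  assume "\<sigma> * U x t + g t < 0"
  moreover have "lap_of (\<sigma> *\<^sub>R D2U x t) = \<sigma> * lap_of (D2U x t)"
    by (simp add: lap_of_def sum_distrib_left)
  ultimately show "a * lap_of (\<sigma> *\<^sub>R D2U x t) + K * (\<sigma> * U x t + g t) \<le> \<sigma> * Ut x t + g' t"
    using super[OF \<open>0 < t\<close>] by simp
qed

lemma lower_barrier:
  fixes U Ut :: "real^'n \<Rightarrow> real \<Rightarrow> real" and \<phi> \<phi>' :: "real \<Rightarrow> real"
  assumes "C_BUC U" "classical_reg U Ut DU D2U" "0 \<le> a"
    and "continuous_on {0..} \<phi>" "\<And>t. 0 < t \<Longrightarrow> (\<phi> has_real_derivative \<phi>' t) (at t)"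
    and init: "\<And>x. \<phi> 0 \<le> U x 0"
    and super: "\<And>x t. 0 < t \<Longrightarrow> U x t < \<phi> t \<Longrightarrow>
      a * lap_of (D2U x t) + K * (U x t - \<phi> t) \<le> Ut x t - \<phi>' t"
    and "0 \<le> t"
  shows "\<phi> t \<le> U x t"
  using comparison_principle[where \<sigma> = 1 and K = K and g = "\<lambda>t. - \<phi> t" and g' = "\<lambda>t. - \<phi>' t",
      OF assms(1-3) continuous_on_minus[OF assms(4)] DERIV_minus[OF assms(5)]]
    init super \<open>0 \<le> t\<close> by simp

lemma upper_barrier:
  fixes U Ut :: "real^'n \<Rightarrow> real \<Rightarrow> real" and \<phi> \<phi>' :: "real \<Rightarrow> real"
  assumes "C_BUC U" "classical_reg U Ut DU D2U" "0 \<le> a"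
    and "continuous_on {0..} \<phi>" "\<And>t. 0 < t \<Longrightarrow> (\<phi> has_real_derivative \<phi>' t) (at t)"
    and init: "\<And>x. U x 0 \<le> \<phi> 0"
    and sub: "\<And>x t. 0 < t \<Longrightarrow> \<phi> t < U x t \<Longrightarrow>
      K * (\<phi> t - U x t) - a * lap_of (D2U x t) \<le> \<phi>' t - Ut x t"
    and "0 \<le> t"
  shows "U x t \<le> \<phi> t"
  using comparison_principle[where \<sigma> = "-1" and K = K and g = \<phi> and g' = \<phi>', OF assms(1-5)]
    init sub \<open>0 \<le> t\<close> by simp

definition bz_reaction :: "real \<Rightarrow> real \<Rightarrow> real \<Rightarrow> real \<Rightarrow> real \<Rightarrow> real" where
  "bz_reaction \<epsilon> h q u v = (1/\<epsilon>) * u * (1 - u) - h * v * (u - q) / (u + q)"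

lemma bz_reaction_nonneg_below_q:
  fixes \<epsilon> h q u v :: real
  assumes "0 < \<epsilon>" "0 < h" "0 \<le> u" "u < q" "q < 1" "0 \<le> v"
  shows "0 \<le> bz_reaction \<epsilon> h q u v"
proof -
  have "h * v * (u - q) / (u + q) \<le> 0"
    using assms by (intro divide_nonpos_nonneg mult_nonneg_nonpos) auto
  moreover have "0 \<le> (1/\<epsilon>) * u * (1 - u)" using assms by simp
  ultimately show ?thesis by (simp add: bz_reaction_def)
qed

lemma bz_reaction_root:
  fixes \<epsilon> h q ubar :: real
  assumes "0 < \<epsilon>" "0 < q" "q < ubar"
    and "ubar * (1 - ubar) * (ubar + q) - \<epsilon> * h * q * (ubar - q) = 0"
  shows "bz_reaction \<epsilon> h q ubar q = 0"
  using assms by (simp add: bz_reaction_def field_simps)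

lemma quotient_diff_sum_mono:
  fixes q a b :: real
  assumes "0 < q" "0 \<le> a" "a \<le> b"
  shows "(a - q) / (a + q) \<le> (b - q) / (b + q)"
proof -
  have "(a - q) * (b + q) \<le> (b - q) * (a + q)"
    using mult_left_mono[OF assms(3), of q] assms by (simp add: algebra_simps)
  then show ?thesis using assms by (simp add: divide_simps)
qed

lemma bz_reaction_above_root:
  fixes \<epsilon> h q ubar u v :: real
  assumes "0 < \<epsilon>" "0 < h" "0 < q" "q < ubar"
    and root: "bz_reaction \<epsilon> h q ubar q = 0" and "ubar < u" "q \<le> v"
  shows "bz_reaction \<epsilon> h q u v \<le> (1/\<epsilon>) * (u - ubar)"
proof -
  have "(1/\<epsilon>) * ubar * (1 - ubar) = h * q * ((ubar - q) / (ubar + q))"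
    using root by (simp add: bz_reaction_def)
  also have "\<dots> \<le> h * q * ((u - q) / (u + q))"
    using assms quotient_diff_sum_mono[of q ubar u] by (intro mult_left_mono) auto
  also have "\<dots> \<le> h * v * ((u - q) / (u + q))"
    using assms by (intro mult_right_mono mult_left_mono) auto
  finally have quotient: "(1/\<epsilon>) * ubar * (1 - ubar) \<le> h * v * (u - q) / (u + q)" by simp
  have "u * (1 - u) - ubar * (1 - ubar) = (u - ubar) * (1 - (u + ubar))"
    by (simp add: algebra_simps)
  also have "\<dots> \<le> (u - ubar) * 1"
    using assms by (intro mult_left_mono) auto
  finally have "(1/\<epsilon>) * (u * (1 - u) - ubar * (1 - ubar)) \<le> (1/\<epsilon>) * (u - ubar)"
    using assms by (intro mult_left_mono) auto
  then have "(1/\<epsilon>) * u * (1 - u) - (1/\<epsilon>) * ubar * (1 - ubar) \<le> (1/\<epsilon>) * (u - ubar)"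
    by (simp only: mult.assoc right_diff_distrib)
  with quotient show ?thesis by (simp add: bz_reaction_def)
qed

lemma bz_reaction_lower_bound:
  fixes \<epsilon> h q ubar u v :: real
  assumes "0 < \<epsilon>" "0 < h" "0 < q" "ubar < 1" "q \<le> u" "u \<le> ubar" "q \<le> v" "v \<le> ubar"
  shows "q * (1 - ubar) / \<epsilon> - (h * ubar / (2*q)) * (u - q) \<le> bz_reaction \<epsilon> h q u v"
proof -
  have "q * (1 - ubar) \<le> u * (1 - u)" using assms by (intro mult_mono) auto
  then have "q * (1 - ubar) / \<epsilon> \<le> (1/\<epsilon>) * u * (1 - u)"
    using assms by (simp add: divide_right_mono)
  moreover have "h * v * (u - q) / (u + q) \<le> (h * ubar / (2*q)) * (u - q)"
  proof -
    have "h * v * (u - q) / (u + q) = (h * v) * ((u - q) / (u + q))" by simp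
    also have "\<dots> \<le> (h * ubar) * ((u - q) / (u + q))"
      using assms by (intro mult_right_mono) auto
    also have "\<dots> \<le> (h * ubar) * ((u - q) / (2*q))"
      using assms by (intro mult_left_mono divide_left_mono) auto
    finally show ?thesis by simp
  qed
  ultimately show ?thesis by (simp add: bz_reaction_def)
qed

lemma bz_reaction_upper_bound:
  fixes \<epsilon> h q ubar u v :: real
  assumes "0 < \<epsilon>" "0 < h" "0 < q" "ubar < 1"
    and root: "bz_reaction \<epsilon> h q ubar q = 0" and "q \<le> u" "u \<le> ubar" "q \<le> v"
  shows "bz_reaction \<epsilon> h q u v \<le> (1/\<epsilon> + h/2) * (ubar - u) - h * (v - q) * (u - q) / 2"
proof -
  have logistic: "(1/\<epsilon>) * u * (1 - u) - (1/\<epsilon>) * ubar * (1 - ubar) \<le> (1/\<epsilon>) * (ubar - u)"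
  proof -
    have "u * (1 - u) - ubar * (1 - ubar) = (ubar - u) * (u + ubar - 1)"
      by (simp add: algebra_simps)
    also have "\<dots> \<le> (ubar - u) * 1"
      using assms by (intro mult_left_mono) auto
    finally have "u * (1 - u) - ubar * (1 - ubar) \<le> ubar - u" by simp
    then have "(1/\<epsilon>) * (u * (1 - u) - ubar * (1 - ubar)) \<le> (1/\<epsilon>) * (ubar - u)"
      using assms by (intro mult_left_mono) auto
    then show ?thesis by (simp only: mult.assoc right_diff_distrib)
  qed
  have quotient: "(ubar - q) / (ubar + q) - (u - q) / (u + q) \<le> (ubar - u) / (2*q)"
  proof -
    have "(ubar - q) / (ubar + q) - (u - q) / (u + q) = 2*q*(ubar - u) / ((u + q) * (ubar + q))"
      using assms by (simp add: field_simps)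
    also have "\<dots> \<le> 2*q*(ubar - u) / ((2*q) * (2*q))"
      using assms by (intro divide_left_mono mult_mono) auto
    also have "\<dots> = (ubar - u) / (2*q)" using assms by (simp add: field_simps)
    finally show ?thesis .
  qed
  have "h * q * ((ubar - q) / (ubar + q) - (u - q) / (u + q)) \<le> h * q * ((ubar - u) / (2*q))"
    using quotient assms by (intro mult_left_mono) auto
  also have "\<dots> = (h/2) * (ubar - u)" using assms by simp
  finally have quotient': "h * q * ((ubar - q) / (ubar + q)) - h * q * ((u - q) / (u + q)) \<le> (h/2) * (ubar - u)"
    by (simp only: right_diff_distrib)
  have "h * v * (u - q) / (u + q) = (h * q * (u - q) + h * (v - q) * (u - q)) / (u + q)"
    by (simp add: algebra_simps)
  then have "h * v * (u - q) / (u + q) = h * q * ((u - q) / (u + q)) + h * (v - q) * (u - q) / (u + q)"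
    by (simp add: add_divide_distrib)
  moreover have "h * (v - q) * (u - q) / 2 \<le> h * (v - q) * (u - q) / (u + q)"
    using assms by (intro divide_left_mono) auto
  moreover have "(1/\<epsilon>) * ubar * (1 - ubar) = h * q * ((ubar - q) / (ubar + q))"
    using root by (simp add: bz_reaction_def)
  moreover have "(1/\<epsilon> + h/2) * (ubar - u) = (1/\<epsilon>) * (ubar - u) + (h/2) * (ubar - u)"
    by (rule distrib_right)
  ultimately show ?thesis
    unfolding bz_reaction_def using logistic quotient' by linarith
qed

definition ramp :: "real \<Rightarrow> real" where
  "ramp t = 1 - exp (- t)"

lemma ramp_has_real_derivative: "(ramp has_real_derivative 1 - ramp t) (at t)"
  unfolding ramp_def by (auto intro!: derivative_eq_intros)

lemma continuous_on_ramp [continuous_intros]: "continuous_on A ramp"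
  unfolding ramp_def by (intro continuous_intros)

lemma ramp_0 [simp]: "ramp 0 = 0"
  by (simp add: ramp_def)

lemma ramp_pos: "0 < t \<Longrightarrow> 0 < ramp t"
  by (simp add: ramp_def)

lemma ramp_le_1: "ramp t \<le> 1"
  by (simp add: ramp_def)

locale bz_classical_solution =
  fixes \<epsilon> h d q ubar :: real
    and u v ut vt :: "real^'n \<Rightarrow> real \<Rightarrow> real"
    and Du Dv :: "real^'n \<Rightarrow> real \<Rightarrow> real^'n" and D2u D2v :: "real^'n \<Rightarrow> real \<Rightarrow> real^'n^'n"
  assumes pos: "0 < \<epsilon>" "0 < h" "0 < d" "0 < q"
    and ubar: "q < ubar" "ubar < 1" "bz_reaction \<epsilon> h q ubar q = 0"
    and C_BUC: "C_BUC u" "C_BUC v"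
    and reg_u: "classical_reg u ut Du D2u" and reg_v: "classical_reg v vt Dv D2v"
    and u_eq: "\<And>x t. 0 < t \<Longrightarrow> ut x t = lap_of (D2u x t) + bz_reaction \<epsilon> h q (u x t) (v x t)"
    and v_eq: "\<And>x t. 0 < t \<Longrightarrow> vt x t = d * lap_of (D2v x t) - v x t + u x t"
    and nonneg: "\<And>x t. 0 \<le> t \<Longrightarrow> 0 \<le> u x t" "\<And>x t. 0 \<le> t \<Longrightarrow> 0 \<le> v x t"
    and init: "\<And>x. q \<le> u x 0" "\<And>x. u x 0 \<le> ubar" "\<And>x. q \<le> v x 0" "\<And>x. v x 0 \<le> ubar"
begin

lemma u_ge_q: "0 \<le> t \<Longrightarrow> q \<le> u x t"
proof (rule lower_barrier[OF C_BUC(1) reg_u zero_le_one, where K = 0 and \<phi>' = "\<lambda>_. 0"])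
  fix x and t :: real assume "0 < t" "u x t < q"
  then show "1 * lap_of (D2u x t) + 0 * (u x t - q) \<le> ut x t - 0"
    using u_eq bz_reaction_nonneg_below_q[of \<epsilon> h "u x t" q "v x t"] pos ubar nonneg by simp
qed (use init in auto)

lemma v_ge_q: "0 \<le> t \<Longrightarrow> q \<le> v x t"
proof (rule lower_barrier[OF C_BUC(2) reg_v less_imp_le[OF pos(3)], where K = "-1" and \<phi>' = "\<lambda>_. 0"])
  fix x and t :: real assume "0 < t"
  then show "d * lap_of (D2v x t) + - 1 * (v x t - q) \<le> vt x t - 0"
    using v_eq u_ge_q by simp
qed (use init in auto)

lemma u_le_ubar: "0 \<le> t \<Longrightarrow> u x t \<le> ubar"
proof (rule upper_barrier[OF C_BUC(1) reg_u zero_le_one, where K = "1/\<epsilon>" and \<phi>' = "\<lambda>_. 0"])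
  fix x and t :: real assume "0 < t" "ubar < u x t"
  then show "1/\<epsilon> * (ubar - u x t) - 1 * lap_of (D2u x t) \<le> 0 - ut x t"
    using u_eq bz_reaction_above_root[of \<epsilon> h q ubar "u x t" "v x t"] pos ubar v_ge_q
    by (simp add: algebra_simps)
qed (use init in auto)

lemma v_le_ubar: "0 \<le> t \<Longrightarrow> v x t \<le> ubar"
proof (rule upper_barrier[OF C_BUC(2) reg_v less_imp_le[OF pos(3)], where K = "-1" and \<phi>' = "\<lambda>_. 0"])
  fix x and t :: real assume "0 < t"
  then show "- 1 * (ubar - v x t) - d * lap_of (D2v x t) \<le> 0 - vt x t"
    using v_eq u_le_ubar by simp
qed (use init in auto)

lemma u_lower_ramp:
  obtains \<alpha> where "0 < \<alpha>" "\<And>x t. 0 \<le> t \<Longrightarrow> q + \<alpha> * ramp t \<le> u x t"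
proof -
  define A where "A = q * (1 - ubar) / \<epsilon>"
  define B where "B = h * ubar / (2 * q)"
  define \<alpha> where "\<alpha> = A / (1 + B)"
  have "0 < A" "0 < B" using pos ubar by (simp_all add: A_def B_def)
  then have "0 < \<alpha>" and A: "A = \<alpha> * (1 + B)" by (simp_all add: \<alpha>_def)
  have "q + \<alpha> * ramp t \<le> u x t" if "0 \<le> t" for x t
  proof (rule lower_barrier[OF C_BUC(1) reg_u zero_le_one, where K = "- B" and \<phi>' = "\<lambda>t. \<alpha> * (1 - ramp t)"])
    fix x and t :: real assume "0 < t"
    have "A - B * (u x t - q) \<le> bz_reaction \<epsilon> h q (u x t) (v x t)"
      using bz_reaction_lower_bound[of \<epsilon> h q ubar "u x t" "v x t"] pos ubar \<open>0 < t\<close>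
        u_ge_q u_le_ubar v_ge_q v_le_ubar by (simp add: A_def B_def)
    moreover have "0 \<le> \<alpha> * B * (1 - ramp t) + \<alpha> * ramp t"
      using \<open>0 < \<alpha>\<close> \<open>0 < B\<close> \<open>0 < t\<close> ramp_pos[of t] ramp_le_1[of t] by simp
    ultimately show "1 * lap_of (D2u x t) + - B * (u x t - (q + \<alpha> * ramp t)) \<le> ut x t - \<alpha> * (1 - ramp t)"
      using u_eq[OF \<open>0 < t\<close>] A by (simp add: algebra_simps)
  qed (use that init in \<open>auto intro!: continuous_intros derivative_eq_intros ramp_has_real_derivative\<close>)
  with \<open>0 < \<alpha>\<close> that show thesis by blast
qed

lemma v_lower_ramp:
  obtains \<beta> where "0 < \<beta>" "\<And>x t. 0 \<le> t \<Longrightarrow> q + \<beta> * ramp t ^ 2 \<le> v x t"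
proof -
  obtain \<alpha> where "0 < \<alpha>" and u_lower: "\<And>x t. 0 \<le> t \<Longrightarrow> q + \<alpha> * ramp t \<le> u x t"
    using u_lower_ramp by blast
  define \<beta> where "\<beta> = \<alpha> / 2"
  have "q + \<beta> * ramp t ^ 2 \<le> v x t" if "0 \<le> t" for x t
  proof (rule lower_barrier[OF C_BUC(2) reg_v less_imp_le[OF pos(3)], where K = "- 1"
        and \<phi>' = "\<lambda>t. \<beta> * (2 * ramp t * (1 - ramp t))"])
    fix x and t :: real assume "0 < t"
    have "\<alpha> * ramp t - \<beta> * (2 * ramp t * (1 - ramp t)) = \<beta> * ramp t ^ 2 + \<beta> * ramp t ^ 2"
      by (simp add: \<beta>_def algebra_simps power2_eq_square)
    moreover have "0 \<le> \<beta> * ramp t ^ 2" using \<open>0 < \<alpha>\<close> by (simp add: \<beta>_def)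
    ultimately show "d * lap_of (D2v x t) + - 1 * (v x t - (q + \<beta> * ramp t ^ 2))
        \<le> vt x t - \<beta> * (2 * ramp t * (1 - ramp t))"
      using v_eq[OF \<open>0 < t\<close>] u_lower[of t x] \<open>0 < t\<close> by simp
  qed (use that init in \<open>auto intro!: continuous_intros derivative_eq_intros ramp_has_real_derivative\<close>)
  moreover have "0 < \<beta>" using \<open>0 < \<alpha>\<close> by (simp add: \<beta>_def)
  ultimately show thesis using that by blast
qed

lemma u_upper_ramp:
  obtains \<kappa> where "0 < \<kappa>" "\<And>x t. 0 \<le> t \<Longrightarrow> u x t \<le> ubar - \<kappa> * ramp t ^ 3"
proof -
  obtain \<beta> where "0 < \<beta>" and v_lower: "\<And>x t. 0 \<le> t \<Longrightarrow> q + \<beta> * ramp t ^ 2 \<le> v x t"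
    using v_lower_ramp by blast
  define L where "L = 1/\<epsilon> + h/2"
  define \<kappa> where "\<kappa> = min ((ubar - q) / 2) (h * \<beta> * (ubar - q) / (4 * (L + 3)))"
  have "0 < L" using pos by (simp add: L_def add_pos_pos)
  then have "0 < \<kappa>" using pos ubar \<open>0 < \<beta>\<close> by (simp add: \<kappa>_def)
  have "\<kappa> * (L + 3) \<le> h * \<beta> * (ubar - q) / (4 * (L + 3)) * (L + 3)"
    using \<open>0 < L\<close> unfolding \<kappa>_def by (intro mult_right_mono min.cobounded2) auto
  also have "\<dots> = h * \<beta> * (ubar - q) / 4" using \<open>0 < L\<close> by (simp add: field_simps)
  finally have \<kappa>_small: "\<kappa> * (L + 3) \<le> h * \<beta> * (ubar - q) / 4" .
  have "u x t \<le> ubar - \<kappa> * ramp t ^ 3" if "0 \<le> t" for x t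
  proof (rule upper_barrier[OF C_BUC(1) reg_u zero_le_one, where K = "- L"
        and \<phi>' = "\<lambda>t. - (\<kappa> * (3 * ramp t ^ 2 * (1 - ramp t)))"])
    fix x and t :: real assume "0 < t" and above: "ubar - \<kappa> * ramp t ^ 3 < u x t"
    define s where "s = ramp t"
    have s: "0 < s" "s \<le> 1" using \<open>0 < t\<close> by (simp_all add: s_def ramp_pos ramp_le_1)
    have "\<kappa> * s ^ 3 \<le> \<kappa>" using \<open>0 < \<kappa>\<close> s by (simp add: power_le_one)
    then have "(ubar - q) / 2 \<le> u x t - q" using above min.cobounded1[of "(ubar - q) / 2"]
      by (simp add: s_def \<kappa>_def)
    moreover have "\<beta> * s ^ 2 \<le> v x t - q" using v_lower[of t x] \<open>0 < t\<close> by (simp add: s_def)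
    ultimately have "(\<beta> * s ^ 2) * ((ubar - q) / 2) \<le> (v x t - q) * (u x t - q)"
      using \<open>0 < \<beta>\<close> ubar v_ge_q[of t x] \<open>0 < t\<close> by (intro mult_mono) auto
    then have "s ^ 2 * (h * \<beta> * (ubar - q) / 4) \<le> h * (v x t - q) * (u x t - q) / 2"
      using pos mult_left_mono[of _ _ h] by (fastforce simp: field_simps)
    moreover have "s ^ 2 * (\<kappa> * (L + 3)) \<le> s ^ 2 * (h * \<beta> * (ubar - q) / 4)"
      using \<kappa>_small by (intro mult_left_mono) auto
    moreover have "L * (\<kappa> * s ^ 3) + \<kappa> * (3 * s ^ 2 * (1 - s)) \<le> s ^ 2 * (\<kappa> * (L + 3))"
    proof -
      have "s ^ 3 \<le> s ^ 2" using s by (simp add: power_decreasing)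
      then have "L * (\<kappa> * s ^ 3) \<le> L * (\<kappa> * s ^ 2)"
        using \<open>0 < L\<close> \<open>0 < \<kappa>\<close> by (intro mult_left_mono) auto
      moreover have "\<kappa> * (3 * s ^ 2 * (1 - s)) \<le> \<kappa> * (3 * s ^ 2)"
        using \<open>0 < \<kappa>\<close> s by (intro mult_left_mono) auto
      ultimately show ?thesis by (simp add: algebra_simps)
    qed
    moreover have "bz_reaction \<epsilon> h q (u x t) (v x t)
        \<le> L * (ubar - u x t) - h * (v x t - q) * (u x t - q) / 2"
      using bz_reaction_upper_bound[of \<epsilon> h q ubar "u x t" "v x t"] pos ubar \<open>0 < t\<close>
        u_ge_q u_le_ubar v_ge_q by (simp add: L_def)
    moreover have "- L * (ubar - \<kappa> * s ^ 3 - u x t) = - (L * (ubar - u x t)) + L * (\<kappa> * s ^ 3)"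
      by (simp add: algebra_simps)
    ultimately show "- L * (ubar - \<kappa> * ramp t ^ 3 - u x t) - 1 * lap_of (D2u x t)
        \<le> - (\<kappa> * (3 * ramp t ^ 2 * (1 - ramp t))) - ut x t"
      unfolding s_def[symmetric] using u_eq[OF \<open>0 < t\<close>, of x] by linarith
  qed (use that init in \<open>auto intro!: continuous_intros derivative_eq_intros ramp_has_real_derivative\<close>)
  with \<open>0 < \<kappa>\<close> that show thesis by blast
qed

lemma v_upper_ramp:
  obtains \<sigma> where "0 < \<sigma>" "\<And>x t. 0 \<le> t \<Longrightarrow> v x t \<le> ubar - \<sigma> * ramp t ^ 4"
proof -
  obtain \<kappa> where "0 < \<kappa>" and u_upper: "\<And>x t. 0 \<le> t \<Longrightarrow> u x t \<le> ubar - \<kappa> * ramp t ^ 3"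
    using u_upper_ramp by blast
  define \<sigma> where "\<sigma> = \<kappa> / 4"
  have "v x t \<le> ubar - \<sigma> * ramp t ^ 4" if "0 \<le> t" for x t
  proof (rule upper_barrier[OF C_BUC(2) reg_v less_imp_le[OF pos(3)], where K = "- 1"
        and \<phi>' = "\<lambda>t. - (\<sigma> * (4 * ramp t ^ 3 * (1 - ramp t)))"])
    fix x and t :: real assume "0 < t"
    have "\<kappa> * ramp t ^ 3 - \<sigma> * (4 * ramp t ^ 3 * (1 - ramp t)) = 4 * (\<sigma> * ramp t ^ 4)"
      by (simp add: \<sigma>_def algebra_simps power_numeral_reduce)
    moreover have "0 \<le> \<sigma> * ramp t ^ 4" using \<open>0 < \<kappa>\<close> by (simp add: \<sigma>_def)
    ultimately show "- 1 * (ubar - \<sigma> * ramp t ^ 4 - v x t) - d * lap_of (D2v x t)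
        \<le> - (\<sigma> * (4 * ramp t ^ 3 * (1 - ramp t))) - vt x t"
      using v_eq[OF \<open>0 < t\<close>] u_upper[of t x] \<open>0 < t\<close> by simp
  qed (use that init in \<open>auto intro!: continuous_intros derivative_eq_intros ramp_has_real_derivative\<close>)
  moreover have "0 < \<sigma>" using \<open>0 < \<kappa>\<close> by (simp add: \<sigma>_def)
  ultimately show thesis using that by blast
qed

lemma solution_in_open_square:
  assumes "0 < t"
  shows "u x t \<in> {q<..<ubar} \<and> v x t \<in> {q<..<ubar}"
proof -
  have "0 \<le> t" "0 < ramp t" using assms by (simp_all add: ramp_pos)
  obtain \<alpha> \<beta> \<kappa> \<sigma> where "0 < \<alpha>" "0 < \<beta>" "0 < \<kappa>" "0 < \<sigma>"
    and "q + \<alpha> * ramp t \<le> u x t" "q + \<beta> * ramp t ^ 2 \<le> v x t"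
    and "u x t \<le> ubar - \<kappa> * ramp t ^ 3" "v x t \<le> ubar - \<sigma> * ramp t ^ 4"
    using u_lower_ramp v_lower_ramp u_upper_ramp v_upper_ramp \<open>0 \<le> t\<close> by metis
  moreover from calculation(1-4) \<open>0 < ramp t\<close>
  have "0 < \<alpha> * ramp t" "0 < \<beta> * ramp t ^ 2" "0 < \<kappa> * ramp t ^ 3" "0 < \<sigma> * ramp t ^ 4"
    by simp_all
  ultimately show ?thesis by simp
qed

end

theorem theorem1:
  fixes \<epsilon> h d q ubar :: real
    and u0 v0 :: "real^'n \<Rightarrow> real"
    and u v :: "real^'n \<Rightarrow> real \<Rightarrow> real"
  assumes "\<epsilon> > 0" "h > 0" "d > 0" "0 < q" "q < 1"
    and "q < ubar" "ubar < 1"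
    and "ubar * (1 - ubar) * (ubar + q) - \<epsilon> * h * q * (ubar - q) = 0"
    and "u0 \<in> BUC" "v0 \<in> BUC"
    and "\<forall>x. u0 x \<in> {q<..<ubar} \<and> v0 x \<in> {q<..<ubar}"
    and "BZ_solution \<epsilon> h q d u0 v0 u v"
  shows "\<forall>x. \<forall>t>0. u x t \<in> {q<..<ubar} \<and> v x t \<in> {q<..<ubar}"
proof -
  obtain ut Du D2u vt Dv D2v where reg: "classical_reg u ut Du D2u" "classical_reg v vt Dv D2v"
    and pde: "\<forall>x. \<forall>t>0.
      ut x t = lap_of (D2u x t) + (1/\<epsilon>) * u x t * (1 - u x t) - h * v x t * (u x t - q) / (u x t + q) \<and>
      vt x t = d * lap_of (D2v x t) - v x t + u x t"
    using assms(12) unfolding BZ_solution_def by blast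
  interpret bz_classical_solution \<epsilon> h d q ubar u v ut vt Du Dv D2u D2v
  proof
    show "bz_reaction \<epsilon> h q ubar q = 0"
      using assms by (intro bz_reaction_root) auto
    show "ut x t = lap_of (D2u x t) + bz_reaction \<epsilon> h q (u x t) (v x t)" if "0 < t" for x t
      using pde that by (simp add: bz_reaction_def)
  qed (use assms reg pde in \<open>auto simp: BZ_solution_def less_imp_le\<close>)
  show ?thesis using solution_in_open_square by blast
qed

end
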